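(* Let $r\in\mathbb{R}$ and $\sigma_0>0$, $\alpha_0\in\mathbb{C}$. Consider Bayesian estimation of an unknown displacement $\alpha=\alpha_{\mathrm R}+i\alpha_{\mathrm I}\in\mathbb{C}$ with the Gaussian prior density $$p(\alpha)=\frac{1}{2\pi\sigma_0^2}\exp\!\Big(-\frac{|\alpha-\alpha_0|^2}{2\sigma_0^2}\Big)$$ (with respect to $d\alpha=d\alpha_{\mathrm R}\,d\alpha_{\mathrm I}$), where the probe is the squeezed vacuum $|\xi\rangle=\hat S(r)|0\rangle$ (real squeezing parameter $\xi=r$), the encoded state is $\hat D(\alpha)|\xi\rangle$, and the measurement is heterodyne detection, i.e. the POVM $\{\tfrac1\pi|\beta\rangle\langle\beta|\}_{\beta\in\mathbb{C}}$ with $|\beta\rangle$ coherent states, so that the likelihood is $p(\beta|\alpha)=\tfrac1\pi|\langle\beta|\hat D(\alpha)|\xi\rangle|^2$. Then for every outcome $\beta=\beta_{\mathrm R}+i\beta_{\mathrm I}$ the posterior $p(\alpha|\beta)$ is a product of independent Gaussian distributions in $\alpha_{\mathrm R}$ and $\alpha_{\mathrm I}$ with means $$\hat\alpha_{\mathrm R}(\beta)=\frac{4\beta_{\mathrm R}\sigma_0^2+\alpha_{0,\mathrm R}(1+e^{-2r})}{4\sigma_0^2+1+e^{-2r}},\qquad \hat\alpha_{\mathrm I}(\beta)=\frac{4\beta_{\mathrm I}\sigma_0^2+\alpha_{0,\mathrm I}(1+e^{2r})}{4\sigma_0^2+1+e^{2r}}$$ and variances $$\Big[\frac{1}{\sigma_0^2}+2(1+\tanh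 r)\Big]^{-1}\ \text{(real part)},\qquad \Big[\frac{1}{\sigma_0^2}+2(1-\tanh r)\Big]^{-1}\ \text{(imaginary part)}.$$ Consequently the total posterior variance $\int d\alpha\,p(\alpha|\beta)\,|\alpha-\hat\alpha(\beta)|^2$, with $\hat\alpha=\hat\alpha_{\mathrm R}+i\hat\alpha_{\mathrm I}$, is independent of $\beta$ and hence equals its average $\bar V_{\mathrm{post}}(r)$ over outcomes, and $$\bar V_{\mathrm{post}}(r)\ \ge\ \bar V_{\mathrm{post}}(0)=\frac{2\sigma_0^2}{1+2\sigma_0^2}\qquad\text{for all } r\in\mathbb{R}.$$
   Context: Single bosonic mode with annihilation operator $\hat a$, $[\hat a,\hat a^\dagger]=1$, quadratures $\hat q=(\hat a+\hat a^\dagger)/\sqrt2$, $\hat p=i(\hat a^\dagger-\hat a)/\sqrt2$. Displacement operator $\hat D(\alpha)=\exp(\alpha\hat a^\dagger-\alpha^*\hat a)$; coherent state $|\beta\rangle=\hat D(\beta)|0\rangle$ with $|0\rangle$ the vacuum. Squeezing operator $\hat S(\xi)=\exp[\tfrac12(\xi^*\hat a^2-\xi\hat a^{\dagger 2})]$; for real $r$ the state $\hat S(r)|0\rangle$ has $\hat q$-variance $e^{-2r}/2$ and $\hat p$-variance $e^{2r}/2$. Bayesian setting: posterior $p(\alpha|\beta)=p(\beta|\alpha)p(\alpha)/p(\beta)$ with $p(\beta)=\int d\alpha\,p(\beta|\alpha)p(\alpha)$; the average posterior variance is $\bar V_{\mathrm{post}}=\int d^2\beta\,p(\beta)\int d\alpha\,p(\alpha|\beta)|\alpha-\hat\alpha(\beta)|^2$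 with $\hat\alpha(\beta)$ the posterior mean. *)

theory Defs
  imports "HOL-Probability.Probability"
begin

text \<open>Schroedinger (position) representation of the single bosonic mode:
  states are wavefunctions real \<Rightarrow> complex, with q = (a + a^dagger)/sqrt 2 acting by
  multiplication and p = -i d/dq.\<close>

definition vac :: "real \<Rightarrow> complex" where
  "vac q = complex_of_real (pi powr (-1/4) * exp (-(q\<^sup>2) / 2))"

text \<open>Squeezing operator S(r) for real r: acts as the unitary dilation
  (S(r) psi)(q) = e^(r/2) psi(e^r q); S(r)|0> has q-variance e^(-2r)/2.\<close>
definition squeeze :: "real \<Rightarrow> (real \<Rightarrow> complex) \<Rightarrow> real \<Rightarrow> complex" where
  "squeeze r \<psi> q = complex_of_real (exp (r / 2)) * \<psi> (exp r * q)"

text \<open>Displacement operator D(alpha) = exp(i(p0 q - q0 p)) with q0 = sqrt 2 Re alpha,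
  p0 = sqrt 2 Im alpha:  (D(alpha) psi)(q) = e^(-i p0 q0/2) e^(i p0 q) psi(q - q0).\<close>
definition displace :: "complex \<Rightarrow> (real \<Rightarrow> complex) \<Rightarrow> real \<Rightarrow> complex" where
  "displace \<alpha> \<psi> q =
     (let q0 = sqrt 2 * Re \<alpha>; p0 = sqrt 2 * Im \<alpha>
      in cis (p0 * q - p0 * q0 / 2) * \<psi> (q - q0))"

definition coherent :: "complex \<Rightarrow> real \<Rightarrow> complex" where
  "coherent \<beta> = displace \<beta> vac"

definition braket :: "(real \<Rightarrow> complex) \<Rightarrow> (real \<Rightarrow> complex) \<Rightarrow> complex" where
  "braket \<phi> \<psi> = (LINT q|lborel. cnj (\<phi> q) * \<psi> q)"

definition likelihood :: "real \<Rightarrow> complex \<Rightarrow> complex \<Rightarrow> real" where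
  "likelihood r \<beta> \<alpha> = (1 / pi) * (cmod (braket (coherent \<beta>) (displace \<alpha> (squeeze r vac))))\<^sup>2"

definition prior :: "real \<Rightarrow> complex \<Rightarrow> complex \<Rightarrow> real" where
  "prior \<sigma>0 \<alpha>0 \<alpha> = 1 / (2 * pi * \<sigma>0\<^sup>2) * exp (- (cmod (\<alpha> - \<alpha>0))\<^sup>2 / (2 * \<sigma>0\<^sup>2))"

definition evidence :: "real \<Rightarrow> real \<Rightarrow> complex \<Rightarrow> complex \<Rightarrow> real" where
  "evidence r \<sigma>0 \<alpha>0 \<beta> = (LINT \<alpha>|lborel. likelihood r \<beta> \<alpha> * prior \<sigma>0 \<alpha>0 \<alpha>)"

definition posterior :: "real \<Rightarrow> real \<Rightarrow> complex \<Rightarrow> complex \<Rightarrow> complex \<Rightarrow> real" where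
  "posterior r \<sigma>0 \<alpha>0 \<beta> \<alpha> = likelihood r \<beta> \<alpha> * prior \<sigma>0 \<alpha>0 \<alpha> / evidence r \<sigma>0 \<alpha>0 \<beta>"

definition post_mean :: "real \<Rightarrow> real \<Rightarrow> complex \<Rightarrow> complex \<Rightarrow> complex" where
  "post_mean r \<sigma>0 \<alpha>0 \<beta> = (LINT \<alpha>|lborel. posterior r \<sigma>0 \<alpha>0 \<beta> \<alpha> *\<^sub>R \<alpha>)"

definition post_var :: "real \<Rightarrow> real \<Rightarrow> complex \<Rightarrow> complex \<Rightarrow> real" where
  "post_var r \<sigma>0 \<alpha>0 \<beta> =
     (LINT \<alpha>|lborel. posterior r \<sigma>0 \<alpha>0 \<beta> \<alpha> * (cmod (\<alpha> - post_mean r \<sigma>0 \<alpha>0 \<beta>))\<^sup>2)"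

definition avg_post_var :: "real \<Rightarrow> real \<Rightarrow> complex \<Rightarrow> real" where
  "avg_post_var r \<sigma>0 \<alpha>0 = (LINT \<beta>|lborel. evidence r \<sigma>0 \<alpha>0 \<beta> * post_var r \<sigma>0 \<alpha>0 \<beta>)"

end

theory Submission
  imports Defs
begin

text \<open>Everything is Gaussian. In the position representation the integrand of
  <beta|D(alpha)S(r)|0> is a plane wave times a normal density in q (complete the square), so the
  overlap is a value of the characteristic function of a normal distribution, and the heterodyne
  likelihood is a product of normal densities in Re alpha and Im alpha centred at Re beta, Im beta.
  The prior factorises in the same way, and in each quadrature the product of two normal densities
  is a normal density in beta times a normal density in alpha whose variance does not depend on
  beta. So the posterior is a product of normals, its mean and variance are Gaussian moments on
  the plane, and the total variance is 1/(A + 2t) + 1/(A - 2t) with A = 1/sigma0^2 + 2 and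
  t = tanh r, which by convexity of 1/x is smallest at t = 0.\<close>

lemma gaussian_exponent_add:
  fixes A B a b x :: real
  assumes "A > 0" and "B > 0"
  shows "- (x - a)\<^sup>2 / (2 * A) + - (x - b)\<^sup>2 / (2 * B) =
    - (b - a)\<^sup>2 / (2 * (A + B)) + - (x - (a * B + b * A) / (A + B))\<^sup>2 / (2 * (A * B / (A + B)))"
  using assms by (simp add: divide_simps power2_eq_square) algebra

lemma normal_density_mult:
  assumes "s1 > 0" and "s2 > 0"
  shows "normal_density a s1 x * normal_density b s2 x =
     normal_density a (sqrt (s1\<^sup>2 + s2\<^sup>2)) b *
     normal_density ((a * s2\<^sup>2 + b * s1\<^sup>2) / (s1\<^sup>2 + s2\<^sup>2)) (sqrt (s1\<^sup>2 * s2\<^sup>2 / (s1\<^sup>2 + s2\<^sup>2))) x"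
proof -
  define A B where "A = s1\<^sup>2" and "B = s2\<^sup>2"
  have A: "A > 0" and B: "B > 0" using assms by (simp_all add: A_def B_def)
  have "exp (- (x - a)\<^sup>2 / (2 * A)) * exp (- (x - b)\<^sup>2 / (2 * B)) =
      exp (- (b - a)\<^sup>2 / (2 * (A + B))) * exp (- (x - (a * B + b * A) / (A + B))\<^sup>2 / (2 * (A * B / (A + B))))"
    unfolding exp_add[symmetric] gaussian_exponent_add[OF A B] ..
  moreover have "sqrt (2 * pi * A) * sqrt (2 * pi * B) = sqrt (2 * pi * (A + B)) * sqrt (2 * pi * (A * B / (A + B)))"
    using A B by (simp add: real_sqrt_mult[symmetric] field_simps)
  ultimately show ?thesis
    using A B by (simp add: normal_density_def A_def[symmetric] B_def[symmetric] field_simps)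
qed

lemma normal_density_commute: "normal_density a s b = normal_density b s a"
  by (simp add: normal_density_def power2_commute)

lemma normal_density_conjugate_update:
  fixes a b x \<sigma> E :: real
  assumes "\<sigma> > 0" and "E > 0"
  shows "normal_density b (sqrt ((1 + E) / 4)) x * normal_density a \<sigma> x =
    normal_density a (sqrt ((1 + E) / 4 + \<sigma>\<^sup>2)) b *
    normal_density ((4 * b * \<sigma>\<^sup>2 + a * (1 + E)) / (4 * \<sigma>\<^sup>2 + 1 + E)) (sqrt (1 / (1 / \<sigma>\<^sup>2 + 4 / (1 + E)))) x"
proof -
  have v: "(sqrt ((1 + E) / 4))\<^sup>2 = (1 + E) / 4"
    using assms by simp
  have "(b * \<sigma>\<^sup>2 + a * ((1 + E) / 4)) / ((1 + E) / 4 + \<sigma>\<^sup>2) = (4 * b * \<sigma>\<^sup>2 + a * (1 + E)) / (4 * \<sigma>\<^sup>2 + 1 + E)"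
      "(1 + E) / 4 * \<sigma>\<^sup>2 / ((1 + E) / 4 + \<sigma>\<^sup>2) = 1 / (1 / \<sigma>\<^sup>2 + 4 / (1 + E))"
    using assms by (simp_all add: divide_simps add_pos_pos) algebra+
  then show ?thesis
    using normal_density_mult[of "sqrt ((1 + E) / 4)" \<sigma> b x a] assms
    by (simp add: v normal_density_commute[of b])
qed

lemma integral_cis_normal_density:
  assumes "s > 0"
  shows "(LINT q|lborel. cis (p * q) * complex_of_real (normal_density m s q)) =
    cis (p * m) * complex_of_real (exp (- (p * s)\<^sup>2 / 2))"
proof -
  have std: "s * normal_density m s (m + s * x) = std_normal_density x" for x
    using assms by (simp add: normal_density_def real_sqrt_mult power_mult_distrib field_simps)
  have "(LINT q|lborel. cis (p * q) * complex_of_real (normal_density m s q))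
      = (LINT x|lborel. s *\<^sub>R (cis (p * (m + s * x)) * complex_of_real (normal_density m s (m + s * x))))"
    using assms by (subst lborel_integral_real_affine[where c = s and t = m]) simp_all
  also have "\<dots> = (LINT x|lborel. cis (p * m) * (cis ((p * s) * x) * complex_of_real (std_normal_density x)))"
    by (rule arg_cong[where f = "integral\<^sup>L lborel"])
      (simp add: std[symmetric] scaleR_conv_of_real cis_mult[symmetric] distrib_left mult_ac)
  also have "\<dots> = cis (p * m) * char std_normal_distribution (p * s)"
    unfolding char_def integral_mult_right_zero
    by (subst integral_density) (auto simp: cis_conv_exp scaleR_conv_of_real mult_ac)
  finally show ?thesis
    by (simp add: char_std_normal_distribution)
qed

lemma one_plus_minus_tanh_real:
  fixes r :: real
  shows "4 / (1 + exp (-2 * r)) = 2 * (1 + tanh r)" and "4 / (1 + exp (2 * r)) = 2 * (1 - tanh r)"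
proof -
  have "exp (-2 * r) * exp (2 * r) = 1" by (simp add: exp_add[symmetric])
  moreover have "1 + exp (-2 * r) > 0" "1 + exp (2 * r) > 0" by (simp_all add: add_pos_pos)
  ultimately show "4 / (1 + exp (-2 * r)) = 2 * (1 + tanh r)" "4 / (1 + exp (2 * r)) = 2 * (1 - tanh r)"
    unfolding tanh_real_altdef by (simp_all add: divide_simps) algebra+
qed

lemma inverse_midpoint_le:
  fixes A d :: real
  assumes "\<bar>d\<bar> < A"
  shows "2 / A \<le> 1 / (A + d) + 1 / (A - d)"
proof -
  have "A + d > 0" "A - d > 0" using assms by linarith+
  moreover have "(A + d) * (A - d) \<le> A * A"
    by (simp add: algebra_simps)
  ultimately show ?thesis
    by (simp add: divide_simps)
qed

lemma measurable_Complex_pair [measurable]: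
  "(\<lambda>z. Complex (fst z) (snd z)) \<in> borel_measurable (lborel \<Otimes>\<^sub>M lborel)"
  unfolding Complex_eq by measurable

lemma lborel_complex_eq_distr_pair:
  "(lborel :: complex measure) = distr (lborel \<Otimes>\<^sub>M lborel) borel (\<lambda>z. Complex (fst z) (snd z))"
proof (rule lborel_eqI)
  fix l u :: complex
  assume lu: "\<And>b. b \<in> Basis \<Longrightarrow> l \<bullet> b \<le> u \<bullet> b"
  then have "Re l \<le> Re u" "Im l \<le> Im u"
    using lu[of 1] lu[of \<i>] by (auto simp: Basis_complex_def inner_complex_def)
  moreover have "(\<lambda>z. Complex (fst z) (snd z)) -` box l u \<inter> space (lborel \<Otimes>\<^sub>M lborel)
      = {Re l<..<Re u} \<times> {Im l<..<Im u}"
    by (auto simp: box_def Basis_complex_def space_pair_measure)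
  ultimately show "emeasure (distr (lborel \<Otimes>\<^sub>M lborel) borel (\<lambda>z. Complex (fst z) (snd z))) (box l u) =
      ennreal (\<Prod>b\<in>Basis. (u - l) \<bullet> b)"
    by (simp add: emeasure_distr lborel.emeasure_pair_measure_Times Basis_complex_def ennreal_mult)
qed simp

lemma
  fixes f g :: "real \<Rightarrow> real"
  assumes f: "integrable lborel f" and g: "integrable lborel g"
  shows integrable_Re_Im_mult: "integrable lborel (\<lambda>z::complex. f (Re z) * g (Im z))"
    and integral_Re_Im_mult: "(LINT z|lborel. f (Re z) * g (Im z)) = integral\<^sup>L lborel f * integral\<^sup>L lborel g"
proof -
  have [measurable]: "f \<in> borel_measurable borel" "g \<in> borel_measurable borel"
    using f g by auto
  have pair: "integrable (lborel \<Otimes>\<^sub>M lborel) (\<lambda>z. f (fst z) * g (snd z))"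
  proof (rule lborel_pair.Fubini_integrable)
    show "integrable lborel (\<lambda>x. LINT y|lborel. norm (f (fst (x, y)) * g (snd (x, y))))"
      using f g by (simp add: abs_mult integrable_abs)
  qed (use g in simp_all)
  show "integrable lborel (\<lambda>z::complex. f (Re z) * g (Im z))"
    using pair by (subst lborel_complex_eq_distr_pair) (simp add: integrable_distr_eq)
  have "(LINT z|lborel. f (Re z) * g (Im z)) = integral\<^sup>L (lborel \<Otimes>\<^sub>M lborel) (\<lambda>z. f (fst z) * g (snd z))"
    by (subst lborel_complex_eq_distr_pair) (simp add: integral_distr)
  also have "\<dots> = integral\<^sup>L lborel f * integral\<^sup>L lborel g"
    using lborel_pair.integral_fst'[OF pair, symmetric] by simp
  finally show "(LINT z|lborel. f (Re z) * g (Im z)) = integral\<^sup>L lborel f * integral\<^sup>L lborel g" .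
qed

lemma
  fixes a b s t :: real
  assumes s: "s > 0" and t: "t > 0"
  defines "\<rho> \<equiv> \<lambda>z. normal_density a s (Re z) * normal_density b t (Im z)"
  shows integral_normal_density_Re_Im: "(LINT z|lborel. \<rho> z) = 1"
    and integral_normal_density_Re_Im_mean: "(LINT z|lborel. \<rho> z *\<^sub>R z) = Complex a b"
    and integral_normal_density_Re_Im_variance: "(LINT z|lborel. \<rho> z * (cmod (z - Complex a b))\<^sup>2) = s\<^sup>2 + t\<^sup>2"
proof -
  note int_s = integrable_normal_density[OF s] integrable_normal_moment_nz_1[OF s] integrable_normal_moment[OF s]
  note int_t = integrable_normal_density[OF t] integrable_normal_moment_nz_1[OF t] integrable_normal_moment[OF t]
  have var_s: "(LINT x|lborel. normal_density a s x * (x - a)\<^sup>2) = s\<^sup>2"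
    using integral_normal_moment_even[OF s, of a 1] by (simp add: eval_nat_numeral)
  have var_t: "(LINT y|lborel. normal_density b t y * (y - b)\<^sup>2) = t\<^sup>2"
    using integral_normal_moment_even[OF t, of b 1] by (simp add: eval_nat_numeral)
  show "(LINT z|lborel. \<rho> z) = 1"
    unfolding \<rho>_def using integral_Re_Im_mult[OF int_s(1) int_t(1)] s t by simp
  have "(LINT z|lborel. \<rho> z *\<^sub>R z) = (LINT z|lborel. complex_of_real (normal_density a s (Re z) * Re z * normal_density b t (Im z)) +
      \<i> * complex_of_real (normal_density a s (Re z) * (normal_density b t (Im z) * Im z)))"
    by (rule arg_cong[where f = "integral\<^sup>L lborel"]) (auto simp: \<rho>_def complex_eq_iff)
  also have "\<dots> = Complex a b"
    using integrable_Re_Im_mult[OF int_s(2) int_t(1)] integral_Re_Im_mult[OF int_s(2) int_t(1)]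
      integrable_Re_Im_mult[OF int_s(1) int_t(2)] integral_Re_Im_mult[OF int_s(1) int_t(2)]
      integral_normal_moment_nz_1[OF s] integral_normal_moment_nz_1[OF t] s t
    by (simp add: integral_mult_right_zero complex_eq_iff del: of_real_mult)
  finally show "(LINT z|lborel. \<rho> z *\<^sub>R z) = Complex a b" .
  have "(\<lambda>z. \<rho> z * (cmod (z - Complex a b))\<^sup>2) = (\<lambda>z. normal_density a s (Re z) * (Re z - a)\<^sup>2 * normal_density b t (Im z) +
      normal_density a s (Re z) * (normal_density b t (Im z) * (Im z - b)\<^sup>2))"
    by (auto simp: \<rho>_def cmod_power2 algebra_simps)
  then show "(LINT z|lborel. \<rho> z * (cmod (z - Complex a b))\<^sup>2) = s\<^sup>2 + t\<^sup>2"
    using integrable_Re_Im_mult[OF int_s(3) int_t(1)] integral_Re_Im_mult[OF int_s(3) int_t(1)]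
      integrable_Re_Im_mult[OF int_s(1) int_t(3)] integral_Re_Im_mult[OF int_s(1) int_t(3)]
      var_s var_t s t
    by simp
qed

lemma coherent_overlap_integrand:
  fixes r q :: real and \<alpha> \<beta> :: complex
  defines "k \<equiv> (exp r)\<^sup>2"
    and "qa \<equiv> sqrt 2 * Re \<alpha>" and "pa \<equiv> sqrt 2 * Im \<alpha>"
    and "qb \<equiv> sqrt 2 * Re \<beta>" and "pb \<equiv> sqrt 2 * Im \<beta>"
  shows "cnj (coherent \<beta> q) * displace \<alpha> (squeeze r vac) q =
    cis (pb * qb / 2 - pa * qa / 2) * complex_of_real (sqrt (2 * exp r / (1 + k)) * exp (- k * (qa - qb)\<^sup>2 / (2 * (1 + k)))) *
    (cis ((pa - pb) * q) * complex_of_real (normal_density ((qb + k * qa) / (1 + k)) (sqrt (1 / (1 + k))) q))"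
proof -
  have k: "k > 0" by (simp add: k_def)
  have phase: "cnj (cis (pb * q - pb * qb / 2)) * cis (pa * q - pa * qa / 2) = cis (pb * qb / 2 - pa * qa / 2) * cis ((pa - pb) * q)"
    by (simp add: cis_cnj cis_mult algebra_simps)
  have sqrt_exp: "exp (r / 2) = sqrt (exp r)"
    by (rule real_sqrt_unique[symmetric]) (simp_all add: power2_eq_square exp_add[symmetric])
  have "pi powr (-1/4) * pi powr (-1/4) = pi powr (- (1/2))"
    using powr_add[of pi "-1/4" "-1/4", symmetric] by simp
  also have "\<dots> = 1 / sqrt pi"
    unfolding powr_minus_divide powr_half_sqrt[OF pi_ge_zero] ..
  finally have pi_powr: "pi powr (-1/4) * pi powr (-1/4) = 1 / sqrt pi" .
  have "(2 * exp r / (1 + k)) / (2 * pi * (1 / (1 + k))) = exp r / pi"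
    using k by (simp add: divide_simps)
  then have const: "sqrt (2 * exp r / (1 + k)) * (1 / sqrt (2 * pi * (1 / (1 + k)))) = sqrt (exp r) / sqrt pi"
    by (metis real_sqrt_divide times_divide_eq_right mult_1_right)
  have exponent: "- (q - qb)\<^sup>2 / 2 + - (exp r * (q - qa))\<^sup>2 / 2 =
      - k * (qa - qb)\<^sup>2 / (2 * (1 + k)) + - (q - (qb + k * qa) / (1 + k))\<^sup>2 / (2 * (1 / (1 + k)))"
    using k unfolding power_mult_distrib k_def[symmetric] by (simp add: divide_simps power2_eq_square) algebra
  have "pi powr (-1/4) * exp (- (q - qb)\<^sup>2 / 2) * (exp (r / 2) * (pi powr (-1/4) * exp (- (exp r * (q - qa))\<^sup>2 / 2))) =
      (pi powr (-1/4) * pi powr (-1/4)) * exp (r / 2) * exp (- (q - qb)\<^sup>2 / 2 + - (exp r * (q - qa))\<^sup>2 / 2)"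
    by (simp only: exp_add mult_ac)
  also have "\<dots> = sqrt (2 * exp r / (1 + k)) * (1 / sqrt (2 * pi * (1 / (1 + k)))) *
      exp (- k * (qa - qb)\<^sup>2 / (2 * (1 + k)) + - (q - (qb + k * qa) / (1 + k))\<^sup>2 / (2 * (1 / (1 + k))))"
    unfolding exponent pi_powr sqrt_exp const by simp
  also have "\<dots> = sqrt (2 * exp r / (1 + k)) * exp (- k * (qa - qb)\<^sup>2 / (2 * (1 + k))) *
      normal_density ((qb + k * qa) / (1 + k)) (sqrt (1 / (1 + k))) q"
    using k by (simp only: exp_add normal_density_def real_sqrt_pow2 mult_ac) simp
  finally have amplitude: "pi powr (-1/4) * exp (- (q - qb)\<^sup>2 / 2) * (exp (r / 2) * (pi powr (-1/4) * exp (- (exp r * (q - qa))\<^sup>2 / 2))) =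
      sqrt (2 * exp r / (1 + k)) * exp (- k * (qa - qb)\<^sup>2 / (2 * (1 + k))) *
      normal_density ((qb + k * qa) / (1 + k)) (sqrt (1 / (1 + k))) q" .
  have "cnj (coherent \<beta> q) * displace \<alpha> (squeeze r vac) q =
      (cnj (cis (pb * q - pb * qb / 2)) * cis (pa * q - pa * qa / 2)) *
      complex_of_real (pi powr (-1/4) * exp (- (q - qb)\<^sup>2 / 2) * (exp (r / 2) * (pi powr (-1/4) * exp (- (exp r * (q - qa))\<^sup>2 / 2))))"
    by (simp add: coherent_def displace_def squeeze_def vac_def Let_def qa_def pa_def qb_def pb_def right_diff_distrib mult_ac)
  then show ?thesis
    unfolding phase amplitude by (simp add: mult_ac)
qed

lemma likelihood_closed_form:
  "likelihood r \<beta> \<alpha> = 2 * exp r / (pi * (1 + (exp r)\<^sup>2)) *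
    exp (- 2 * ((exp r)\<^sup>2 * (Re \<alpha> - Re \<beta>)\<^sup>2 + (Im \<alpha> - Im \<beta>)\<^sup>2) / (1 + (exp r)\<^sup>2))"
proof -
  define k where "k = (exp r)\<^sup>2"
  define qa pa qb pb where "qa = sqrt 2 * Re \<alpha>" and "pa = sqrt 2 * Im \<alpha>"
    and "qb = sqrt 2 * Re \<beta>" and "pb = sqrt 2 * Im \<beta>"
  define C where "C = sqrt (2 * exp r / (1 + k)) * exp (- k * (qa - qb)\<^sup>2 / (2 * (1 + k)))"
  define s where "s = sqrt (1 / (1 + k))"
  have k: "k > 0" by (simp add: k_def)
  have s: "s > 0" and s2: "s\<^sup>2 = 1 / (1 + k)" using k by (simp_all add: s_def)
  have "braket (coherent \<beta>) (displace \<alpha> (squeeze r vac)) =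
      cis (pb * qb / 2 - pa * qa / 2) * complex_of_real C *
      (cis ((pa - pb) * ((qb + k * qa) / (1 + k))) * complex_of_real (exp (- ((pa - pb) * s)\<^sup>2 / 2)))"
    unfolding braket_def coherent_overlap_integrand[of \<beta> _ \<alpha> r, folded k_def qa_def pa_def qb_def pb_def, folded C_def s_def]
      integral_mult_right_zero integral_cis_normal_density[OF s] ..
  then have "cmod (braket (coherent \<beta>) (displace \<alpha> (squeeze r vac))) = C * exp (- ((pa - pb) * s)\<^sup>2 / 2)"
    using k by (simp add: norm_mult C_def)
  then have "likelihood r \<beta> \<alpha> = 1 / pi * (2 * exp r / (1 + k)) * (exp (- k * (qa - qb)\<^sup>2 / (2 * (1 + k))) * exp (- ((pa - pb) * s)\<^sup>2 / 2))\<^sup>2"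
    using k by (simp add: likelihood_def C_def power_mult_distrib)
  also have "(exp (- k * (qa - qb)\<^sup>2 / (2 * (1 + k))) * exp (- ((pa - pb) * s)\<^sup>2 / 2))\<^sup>2 =
      exp (- 2 * (k * (Re \<alpha> - Re \<beta>)\<^sup>2 + (Im \<alpha> - Im \<beta>)\<^sup>2) / (1 + k))"
    unfolding exp_add[symmetric] exp_double[symmetric] power2_eq_square[symmetric]
    using k by (simp add: qa_def qb_def pa_def pb_def power_mult_distrib s2 right_diff_distrib[symmetric] divide_simps) algebra
  finally show ?thesis
    unfolding k_def by (simp add: field_simps)
qed

text \<open>The variances are the squeezed quadrature variances e^(-2r)/2 and e^(2r)/2 plus the vacuum
  noise 1/2 added by heterodyning, halved because q = sqrt 2 Re alpha and p = sqrt 2 Im alpha.\<close>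

lemma likelihood_eq_normal_density:
  "likelihood r \<beta> \<alpha> =
    normal_density (Re \<beta>) (sqrt ((1 + exp (-2 * r)) / 4)) (Re \<alpha>) *
    normal_density (Im \<beta>) (sqrt ((1 + exp (2 * r)) / 4)) (Im \<alpha>)"
proof -
  define e where "e = exp r"
  define vR vI where "vR = (1 + exp (-2 * r)) / 4" and "vI = (1 + exp (2 * r)) / 4"
  have e: "e > 0" by (simp add: e_def)
  have v: "vR = (1 + e\<^sup>2) / (4 * e\<^sup>2)" "vI = (1 + e\<^sup>2) / 4"
    using e by (simp_all add: vR_def vI_def e_def power2_eq_square exp_add[symmetric] exp_minus field_simps)
  have "sqrt (2 * pi * vR) * sqrt (2 * pi * vI) = sqrt ((pi * (1 + e\<^sup>2) / (2 * e))\<^sup>2)"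
    unfolding real_sqrt_mult[symmetric] v using e by (simp add: divide_simps power2_eq_square)
  also have "\<dots> = pi * (1 + e\<^sup>2) / (2 * e)"
    using e by simp
  finally have prefactor: "sqrt (2 * pi * vR) * sqrt (2 * pi * vI) = pi * (1 + e\<^sup>2) / (2 * e)" .
  have exponent: "- (Re \<alpha> - Re \<beta>)\<^sup>2 / (2 * vR) + - (Im \<alpha> - Im \<beta>)\<^sup>2 / (2 * vI) =
      - 2 * (e\<^sup>2 * (Re \<alpha> - Re \<beta>)\<^sup>2 + (Im \<alpha> - Im \<beta>)\<^sup>2) / (1 + e\<^sup>2)"
    unfolding v using e by (simp add: divide_simps power2_eq_square) algebra
  have vpos: "vR > 0" "vI > 0" by (simp_all add: vR_def vI_def add_pos_pos)
  have "normal_density (Re \<beta>) (sqrt vR) (Re \<alpha>) * normal_density (Im \<beta>) (sqrt vI) (Im \<alpha>) =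
      1 / (sqrt (2 * pi * vR) * sqrt (2 * pi * vI)) *
      (exp (- (Re \<alpha> - Re \<beta>)\<^sup>2 / (2 * vR)) * exp (- (Im \<alpha> - Im \<beta>)\<^sup>2 / (2 * vI)))"
    using vpos by (simp add: normal_density_def power2_commute[of "Re \<beta>"] power2_commute[of "Im \<beta>"])
  also have "\<dots> = likelihood r \<beta> \<alpha>"
    unfolding exp_add[symmetric] prefactor exponent likelihood_closed_form e_def by simp
  finally show ?thesis
    unfolding vR_def vI_def ..
qed

definition hat_alpha_Re :: "real \<Rightarrow> real \<Rightarrow> complex \<Rightarrow> complex \<Rightarrow> real" where
  "hat_alpha_Re r \<sigma>0 \<alpha>0 \<beta> = (4 * Re \<beta> * \<sigma>0\<^sup>2 + Re \<alpha>0 * (1 + exp (-2 * r))) / (4 * \<sigma>0\<^sup>2 + 1 + exp (-2 * r))"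

definition hat_alpha_Im :: "real \<Rightarrow> real \<Rightarrow> complex \<Rightarrow> complex \<Rightarrow> real" where
  "hat_alpha_Im r \<sigma>0 \<alpha>0 \<beta> = (4 * Im \<beta> * \<sigma>0\<^sup>2 + Im \<alpha>0 * (1 + exp (2 * r))) / (4 * \<sigma>0\<^sup>2 + 1 + exp (2 * r))"

definition post_var_Re :: "real \<Rightarrow> real \<Rightarrow> real" where
  "post_var_Re r \<sigma>0 = 1 / (1 / \<sigma>0\<^sup>2 + 2 * (1 + tanh r))"

definition post_var_Im :: "real \<Rightarrow> real \<Rightarrow> real" where
  "post_var_Im r \<sigma>0 = 1 / (1 / \<sigma>0\<^sup>2 + 2 * (1 - tanh r))"

lemma post_var_Re_pos: "\<sigma>0 > 0 \<Longrightarrow> post_var_Re r \<sigma>0 > 0"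
  and post_var_Im_pos: "\<sigma>0 > 0 \<Longrightarrow> post_var_Im r \<sigma>0 > 0"
  using tanh_real_lt_1[of r] tanh_real_gt_neg1[of r]
  by (simp_all add: post_var_Re_def post_var_Im_def add_pos_pos)

lemma prior_eq_normal_density:
  assumes "\<sigma>0 > 0"
  shows "prior \<sigma>0 \<alpha>0 \<alpha> = normal_density (Re \<alpha>0) \<sigma>0 (Re \<alpha>) * normal_density (Im \<alpha>0) \<sigma>0 (Im \<alpha>)"
proof -
  have "normal_density (Re \<alpha>0) \<sigma>0 (Re \<alpha>) * normal_density (Im \<alpha>0) \<sigma>0 (Im \<alpha>) =
      1 / (sqrt (2 * pi * \<sigma>0\<^sup>2) * sqrt (2 * pi * \<sigma>0\<^sup>2)) *
      (exp (- (Re \<alpha> - Re \<alpha>0)\<^sup>2 / (2 * \<sigma>0\<^sup>2)) * exp (- (Im \<alpha> - Im \<alpha>0)\<^sup>2 / (2 * \<sigma>0\<^sup>2)))"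
    by (simp add: normal_density_def)
  also have "\<dots> = prior \<sigma>0 \<alpha>0 \<alpha>"
    unfolding prior_def exp_add[symmetric] real_sqrt_mult_self cmod_power2
    by (simp add: add_divide_distrib diff_divide_distrib)
  finally show ?thesis ..
qed

lemma likelihood_mult_prior:
  assumes "\<sigma>0 > 0"
  shows "likelihood r \<beta> \<alpha> * prior \<sigma>0 \<alpha>0 \<alpha> =
    (normal_density (Re \<alpha>0) (sqrt ((1 + exp (-2 * r)) / 4 + \<sigma>0\<^sup>2)) (Re \<beta>) *
     normal_density (Im \<alpha>0) (sqrt ((1 + exp (2 * r)) / 4 + \<sigma>0\<^sup>2)) (Im \<beta>)) *
    (normal_density (hat_alpha_Re r \<sigma>0 \<alpha>0 \<beta>) (sqrt (post_var_Re r \<sigma>0)) (Re \<alpha>) *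
     normal_density (hat_alpha_Im r \<sigma>0 \<alpha>0 \<beta>) (sqrt (post_var_Im r \<sigma>0)) (Im \<alpha>))"
    (is "_ = ?rhs")
proof -
  have "likelihood r \<beta> \<alpha> * prior \<sigma>0 \<alpha>0 \<alpha> =
      (normal_density (Re \<beta>) (sqrt ((1 + exp (-2 * r)) / 4)) (Re \<alpha>) * normal_density (Re \<alpha>0) \<sigma>0 (Re \<alpha>)) *
      (normal_density (Im \<beta>) (sqrt ((1 + exp (2 * r)) / 4)) (Im \<alpha>) * normal_density (Im \<alpha>0) \<sigma>0 (Im \<alpha>))"
    unfolding likelihood_eq_normal_density prior_eq_normal_density[OF assms] by (simp only: mult_ac)
  also have "\<dots> = ?rhs"
    unfolding normal_density_conjugate_update[OF assms exp_gt_zero]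
      hat_alpha_Re_def hat_alpha_Im_def post_var_Re_def post_var_Im_def one_plus_minus_tanh_real[symmetric]
    by (simp only: mult_ac)
  finally show ?thesis .
qed

lemma evidence_eq_normal_density:
  assumes "\<sigma>0 > 0"
  shows "evidence r \<sigma>0 \<alpha>0 \<beta> =
    normal_density (Re \<alpha>0) (sqrt ((1 + exp (-2 * r)) / 4 + \<sigma>0\<^sup>2)) (Re \<beta>) *
    normal_density (Im \<alpha>0) (sqrt ((1 + exp (2 * r)) / 4 + \<sigma>0\<^sup>2)) (Im \<beta>)"
  unfolding evidence_def likelihood_mult_prior[OF assms] integral_mult_right_zero
  using integral_normal_density_Re_Im[OF real_sqrt_gt_zero real_sqrt_gt_zero, OF post_var_Re_pos post_var_Im_pos, OF assms assms]
  by simp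

lemma evidence_pos: "\<sigma>0 > 0 \<Longrightarrow> evidence r \<sigma>0 \<alpha>0 \<beta> > 0"
  by (simp add: evidence_eq_normal_density normal_density_pos add_pos_pos)

lemma posterior_eq_normal_density:
  assumes "\<sigma>0 > 0"
  shows "posterior r \<sigma>0 \<alpha>0 \<beta> \<alpha> =
    normal_density (hat_alpha_Re r \<sigma>0 \<alpha>0 \<beta>) (sqrt (post_var_Re r \<sigma>0)) (Re \<alpha>) *
    normal_density (hat_alpha_Im r \<sigma>0 \<alpha>0 \<beta>) (sqrt (post_var_Im r \<sigma>0)) (Im \<alpha>)"
  using evidence_pos[OF assms, of r \<alpha>0 \<beta>]
  unfolding posterior_def likelihood_mult_prior[OF assms] evidence_eq_normal_density[OF assms, symmetric]
  by simp

lemma post_mean_eq: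
  assumes "\<sigma>0 > 0"
  shows "post_mean r \<sigma>0 \<alpha>0 \<beta> = Complex (hat_alpha_Re r \<sigma>0 \<alpha>0 \<beta>) (hat_alpha_Im r \<sigma>0 \<alpha>0 \<beta>)"
  unfolding post_mean_def posterior_eq_normal_density[OF assms]
  using integral_normal_density_Re_Im_mean[OF real_sqrt_gt_zero real_sqrt_gt_zero, OF post_var_Re_pos post_var_Im_pos, OF assms assms] .

lemma post_var_eq:
  assumes "\<sigma>0 > 0"
  shows "post_var r \<sigma>0 \<alpha>0 \<beta> = post_var_Re r \<sigma>0 + post_var_Im r \<sigma>0"
  unfolding post_var_def posterior_eq_normal_density[OF assms] post_mean_eq[OF assms]
  using integral_normal_density_Re_Im_variance[OF real_sqrt_gt_zero real_sqrt_gt_zero, OF post_var_Re_pos post_var_Im_pos, OF assms assms]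
    less_imp_le[OF post_var_Re_pos[OF assms]] less_imp_le[OF post_var_Im_pos[OF assms]]
  by simp

lemma avg_post_var_eq:
  assumes "\<sigma>0 > 0"
  shows "avg_post_var r \<sigma>0 \<alpha>0 = post_var_Re r \<sigma>0 + post_var_Im r \<sigma>0"
proof -
  have "(LINT \<beta>|lborel. normal_density (Re \<alpha>0) (sqrt ((1 + exp (-2 * r)) / 4 + \<sigma>0\<^sup>2)) (Re \<beta>) *
      normal_density (Im \<alpha>0) (sqrt ((1 + exp (2 * r)) / 4 + \<sigma>0\<^sup>2)) (Im \<beta>)) = 1"
    using assms by (intro integral_normal_density_Re_Im) (simp_all add: add_pos_pos)
  then show ?thesis
    unfolding avg_post_var_def post_var_eq[OF assms] evidence_eq_normal_density[OF assms] integral_mult_left_zero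
    by simp
qed

lemma post_var_sum_min:
  assumes "\<sigma>0 > 0"
  shows "post_var_Re 0 \<sigma>0 + post_var_Im 0 \<sigma>0 \<le> post_var_Re r \<sigma>0 + post_var_Im r \<sigma>0"
    and "post_var_Re 0 \<sigma>0 + post_var_Im 0 \<sigma>0 = 2 * \<sigma>0\<^sup>2 / (1 + 2 * \<sigma>0\<^sup>2)"
proof -
  have "1 / \<sigma>0\<^sup>2 > 0" using assms by simp
  then have "\<bar>2 * tanh r\<bar> < 1 / \<sigma>0\<^sup>2 + 2"
    unfolding abs_less_iff using tanh_real_lt_1[of r] tanh_real_gt_neg1[of r] by linarith
  from inverse_midpoint_le[OF this]
  show "post_var_Re 0 \<sigma>0 + post_var_Im 0 \<sigma>0 \<le> post_var_Re r \<sigma>0 + post_var_Im r \<sigma>0"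
    by (simp add: post_var_Re_def post_var_Im_def algebra_simps)
  show "post_var_Re 0 \<sigma>0 + post_var_Im 0 \<sigma>0 = 2 * \<sigma>0\<^sup>2 / (1 + 2 * \<sigma>0\<^sup>2)"
    using assms by (simp add: post_var_Re_def post_var_Im_def divide_simps)
qed

theorem mainTheorem1:
  fixes r \<sigma>0 :: real and \<alpha>0 :: complex
  assumes "\<sigma>0 > 0"
  shows
    "(\<forall>\<beta> \<alpha>. posterior r \<sigma>0 \<alpha>0 \<beta> \<alpha> =
        normal_density
          ((4 * Re \<beta> * \<sigma>0\<^sup>2 + Re \<alpha>0 * (1 + exp (-2 * r))) / (4 * \<sigma>0\<^sup>2 + 1 + exp (-2 * r)))
          (sqrt (1 / (1 / \<sigma>0\<^sup>2 + 2 * (1 + tanh r)))) (Re \<alpha>)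
      * normal_density
          ((4 * Im \<beta> * \<sigma>0\<^sup>2 + Im \<alpha>0 * (1 + exp (2 * r))) / (4 * \<sigma>0\<^sup>2 + 1 + exp (2 * r)))
          (sqrt (1 / (1 / \<sigma>0\<^sup>2 + 2 * (1 - tanh r)))) (Im \<alpha>))
   \<and> (\<forall>\<beta>. post_mean r \<sigma>0 \<alpha>0 \<beta> =
        Complex ((4 * Re \<beta> * \<sigma>0\<^sup>2 + Re \<alpha>0 * (1 + exp (-2 * r))) / (4 * \<sigma>0\<^sup>2 + 1 + exp (-2 * r)))
                ((4 * Im \<beta> * \<sigma>0\<^sup>2 + Im \<alpha>0 * (1 + exp (2 * r))) / (4 * \<sigma>0\<^sup>2 + 1 + exp (2 * r))))
   \<and> (\<forall>\<beta>. post_var r \<sigma>0 \<alpha>0 \<beta> =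
        1 / (1 / \<sigma>0\<^sup>2 + 2 * (1 + tanh r)) + 1 / (1 / \<sigma>0\<^sup>2 + 2 * (1 - tanh r)))
   \<and> (\<forall>\<beta>. post_var r \<sigma>0 \<alpha>0 \<beta> = avg_post_var r \<sigma>0 \<alpha>0)
   \<and> avg_post_var 0 \<sigma>0 \<alpha>0 \<le> avg_post_var r \<sigma>0 \<alpha>0
   \<and> avg_post_var 0 \<sigma>0 \<alpha>0 = 2 * \<sigma>0\<^sup>2 / (1 + 2 * \<sigma>0\<^sup>2)"
  using post_var_sum_min(1)[OF assms, of r] post_var_sum_min(2)[OF assms]
  unfolding posterior_eq_normal_density[OF assms] post_mean_eq[OF assms] post_var_eq[OF assms]
    avg_post_var_eq[OF assms] hat_alpha_Re_def hat_alpha_Im_def post_var_Re_def post_var_Im_def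
  by blast

end
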